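(* Let $E\subset\mathbb{T}$ be a Lebesgue measurable set and $n\ge1$ an integer. Then for every $\alpha\in[-\pi,\pi]$, $$\Lambda_n(E)\ge\frac{1}{2\pi}\int_{-\pi}^{\pi}\chi_E(e^{it})\,F_n(t-\alpha)\,dt,$$ where $F_n(x)=\dfrac{\sin^2(nx/2)}{n\sin^2(x/2)}$ is the Fejér kernel.
   Context: $\mathbb{T}$ is the unit circle and $\chi_E$ the characteristic function of $E$. $H^1$ is the Hardy space on the unit disk with norm $\|F\|_1=\frac{1}{2\pi}\int_{-\pi}^{\pi}|F(e^{it})|\,dt$, and $b(H^1)$ is its closed unit ball. For $n\in\mathbb{Z}$, $$\Lambda_n(E)=\sup_{F\in b(H^1)}\left|\frac{1}{2\pi i}\int_E F(\zeta)\,\overline{\zeta}^{\,n}\,d\zeta\right|.$$ *)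

theory Defs
  imports "HOL-Analysis.Analysis"
begin

definition hardy1 :: "(complex \<Rightarrow> complex) set" where
  "hardy1 = {F. F holomorphic_on ball 0 1 \<and>
     (\<exists>B. \<forall>r\<in>{0..<1::real}.
        (1 / (2*pi)) * (LINT t:{-pi..pi}|lebesgue. cmod (F (complex_of_real r * cis t))) \<le> B)}"

text \<open>Boundary values F(e^{it}): radial limit (exists a.e. for F in H^1).\<close>
definition bdry :: "(complex \<Rightarrow> complex) \<Rightarrow> real \<Rightarrow> complex" where
  "bdry F t = Lim (at_left (1::real)) (\<lambda>r. F (complex_of_real r * cis t))"

definition hardy1_norm :: "(complex \<Rightarrow> complex) \<Rightarrow> real" where
  "hardy1_norm F = (1 / (2*pi)) * (LINT t:{-pi..pi}|lebesgue. cmod (bdry F t))"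

text \<open>Lambda_n(E) = sup over the unit ball of H^1 of
  |(1/(2 pi i)) \<integral>_E F(\<zeta>) conj(\<zeta>)^n d\<zeta>|, with \<zeta> = e^{it}, d\<zeta> = i e^{it} dt.\<close>
definition Lambda :: "int \<Rightarrow> complex set \<Rightarrow> real" where
  "Lambda n E = Sup {cmod ((1 / (2 * complex_of_real pi * \<i>)) *
       (LINT t:{-pi..pi}|lebesgue.
          indicator E (cis t) * bdry F t * (cnj (cis t)) powi n * (\<i> * cis t))) |
     F. F \<in> hardy1 \<and> hardy1_norm F \<le> 1}"

text \<open>Fejer kernel (the removable singularities at x \<in> 2 pi Z are a null set).\<close>
definition fejer :: "nat \<Rightarrow> real \<Rightarrow> real" where
  "fejer n x = (sin (real n * x / 2))\<^sup>2 / (real n * (sin (x / 2))\<^sup>2)"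

end

theory Submission
  imports Defs
begin

text \<open>The polynomial
  \<open>P(z) = (1/n) (\<Sum>k<n. (e^(-i\<alpha>) z)^k) (\<Sum>k<n. e^(ik\<alpha>) z^(n-1-k))\<close>
  has boundary values \<open>K_n(t - \<alpha>) e^(i(n-1)t)\<close>, where \<open>K_n(x) = |\<Sum>k<n. e^(ikx)|^2 / n\<close> is the
  Fejer kernel. Hence \<open>\<parallel>P\<parallel>\<^sub>1 = 1\<close>, and testing \<open>\<Lambda>_n(E)\<close> against \<open>P\<close> gives exactly
  \<open>(1/2\<pi>) \<integral>_E K_n(t - \<alpha>) dt\<close>. The analytic work is the bound \<open>\<parallel>F\<parallel>\<^sub>1\<close> for every
  functional in the supremum, which keeps the supremum finite: it needs the boundary function
  of an \<open>H\<^sup>1\<close> function to be measurable and integrable, which follows from Fatou's lemma along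
  the radii.\<close>

definition fejer_cis :: "nat \<Rightarrow> real \<Rightarrow> real" where
  "fejer_cis n x = (cmod (\<Sum>k<n. cis (real k * x)))\<^sup>2 / real n"

lemma norm_cis_minus_one_sq: "(cmod (cis x - 1))\<^sup>2 = 4 * (sin (x/2))\<^sup>2"
proof -
  have "(cmod (cis x - 1))\<^sup>2 = (cos x - 1)\<^sup>2 + (sin x)\<^sup>2"
    by (simp add: cmod_def)
  also have "\<dots> = 2 - 2 * cos x"
    by (simp add: power2_eq_square algebra_simps sin_squared_eq)
  also have "cos x = 1 - 2 * (sin (x/2))\<^sup>2"
    using cos_double_sin[of "x/2"] by simp
  finally show ?thesis by simp
qed

text \<open>The two kernels agree off the zeros of \<open>sin (x/2)\<close>, where \<open>fejer\<close> is \<open>0/0 = 0\<close>.\<close>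
lemma fejer_le_fejer_cis: "fejer n x \<le> fejer_cis n x"
proof (cases "sin (x/2) = 0")
  case True
  then show ?thesis by (simp add: fejer_def fejer_cis_def)
next
  case False
  have "(\<Sum>k<n. cis (real k * x)) = (\<Sum>k<n. cis x ^ k)"
    by (simp add: Complex.DeMoivre)
  then have "cis (real n * x) - 1 = (cis x - 1) * (\<Sum>k<n. cis (real k * x))"
    using power_diff_1_eq[of "cis x" n] by (simp add: Complex.DeMoivre)
  then have "(cmod (cis (real n * x) - 1))\<^sup>2 = (cmod (cis x - 1))\<^sup>2 * (cmod (\<Sum>k<n. cis (real k * x)))\<^sup>2"
    by (simp add: norm_mult power_mult_distrib)
  then have "(cmod (\<Sum>k<n. cis (real k * x)))\<^sup>2 = (sin (real n * x / 2))\<^sup>2 / (sin (x/2))\<^sup>2"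
    using False by (simp add: norm_cis_minus_one_sq field_simps)
  then show ?thesis
    by (simp add: fejer_def fejer_cis_def field_simps)
qed

lemma fejer_nonneg: "fejer n x \<ge> 0"
  by (simp add: fejer_def)

lemma fejer_cis_nonneg: "fejer_cis n x \<ge> 0"
  by (simp add: fejer_cis_def)

lemma continuous_on_fejer_cis: "continuous_on A (\<lambda>t. fejer_cis n (t - \<alpha>))"
  unfolding fejer_cis_def divide_inverse by (intro continuous_intros)

lemma fejer_cis_eq_cos_sum:
  "fejer_cis n x = (\<Sum>j<n. \<Sum>k<n. cos (real_of_int (int j - int k) * x)) / real n"
proof -
  define u where "u = (\<Sum>k<n. cis (real k * x))"
  have "u * cnj u = (\<Sum>j<n. \<Sum>k<n. cis (real_of_int (int j - int k) * x))"
    unfolding u_def by (simp add: cnj_sum cis_cnj sum_product cis_mult algebra_simps)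
  then have "Re (u * cnj u) = (\<Sum>j<n. \<Sum>k<n. cos (real_of_int (int j - int k) * x))"
    by (simp add: Re_sum)
  moreover have "Re (u * cnj u) = (cmod u)\<^sup>2"
    by (simp add: complex_norm_square[symmetric])
  ultimately show ?thesis by (simp add: fejer_cis_def u_def)
qed

lemma has_integral_cos_int_multiple:
  fixes m :: int
  shows "((\<lambda>t. cos (real_of_int m * (t - \<alpha>))) has_integral (if m = 0 then 2*pi else 0)) {-pi..pi}"
proof (cases "m = 0")
  case True
  then show ?thesis using has_integral_const_real[of "1::real" "-pi" pi] by simp
next
  case False
  have "((\<lambda>t. sin (real_of_int m * (t - \<alpha>)) / real_of_int m) has_real_derivative
          cos (real_of_int m * (t - \<alpha>))) (at t within {-pi..pi})" for t
    using False by (auto intro!: derivative_eq_intros)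
  then have "((\<lambda>t. cos (real_of_int m * (t - \<alpha>))) has_integral
     sin (real_of_int m * (pi - \<alpha>)) / real_of_int m - sin (real_of_int m * (-pi - \<alpha>)) / real_of_int m)
     {-pi..pi}"
    by (intro fundamental_theorem_of_calculus) (auto simp: has_real_derivative_iff_has_vector_derivative)
  moreover have "real_of_int m * (pi - \<alpha>) = real_of_int m * (-pi - \<alpha>) + 2 * pi * real_of_int m"
    by (simp add: algebra_simps)
  ultimately show ?thesis
    using False by (simp add: sin_add)
qed

lemma has_integral_fejer_cis:
  assumes "n \<ge> 1"
  shows "((\<lambda>t. fejer_cis n (t - \<alpha>)) has_integral 2*pi) {-pi..pi}"
proof -
  have "((\<lambda>t. fejer_cis n (t - \<alpha>)) has_integral
        (\<Sum>j<n. \<Sum>k<n. if int j - int k = 0 then 2*pi else 0) / real n) {-pi..pi}"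
    unfolding fejer_cis_eq_cos_sum
    by (intro has_integral_divide has_integral_sum finite_lessThan has_integral_cos_int_multiple)
  moreover have "(\<Sum>j<n. \<Sum>k<n. if int j - int k = 0 then 2*pi else 0) = real n * (2*pi)"
    by (simp add: sum.delta)
  ultimately show ?thesis using assms by simp
qed

lemma fejer_cis_set_integrable: "set_integrable lebesgue {-pi..pi} (\<lambda>t. fejer_cis n (t - \<alpha>))"
  by (intro absolutely_integrable_continuous_real continuous_on_fejer_cis)

lemma set_integral_fejer_cis:
  assumes "n \<ge> 1"
  shows "(LINT t:{-pi..pi}|lebesgue. fejer_cis n (t - \<alpha>)) = 2*pi"
  using set_lebesgue_integral_eq_integral(2)[OF fejer_cis_set_integrable] has_integral_fejer_cis[OF assms]
  by (simp add: integral_unique)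

text \<open>On the unit circle \<open>cnj z = 1/z\<close>, so the second factor is \<open>z^(n-1)\<close> times the conjugate of
  the first; this makes the boundary values the real multiples \<open>fejer_cis n (t - \<alpha>)\<close> of
  \<open>z^(n-1)\<close>.\<close>
definition fejer_poly :: "nat \<Rightarrow> real \<Rightarrow> complex \<Rightarrow> complex" where
  "fejer_poly n \<alpha> z =
     (1 / of_nat n) * (\<Sum>k<n. (cis (-\<alpha>) * z) ^ k) * (\<Sum>k<n. cis (real k * \<alpha>) * z ^ (n - 1 - k))"

lemma fejer_poly_cis:
  "fejer_poly n \<alpha> (cis t) = of_real (fejer_cis n (t - \<alpha>)) * cis (real (n - 1) * t)"
proof -
  define u where "u = (\<Sum>k<n. cis (real k * (t - \<alpha>)))"
  have "(\<Sum>k<n. (cis (-\<alpha>) * cis t) ^ k) = u"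
    unfolding u_def by (simp add: cis_mult Complex.DeMoivre algebra_simps)
  moreover have "(\<Sum>k<n. cis (real k * \<alpha>) * cis t ^ (n - 1 - k)) = cis (real (n - 1) * t) * cnj u"
    unfolding u_def sum_distrib_left cnj_sum
  proof (intro sum.cong refl)
    fix k assume "k \<in> {..<n}"
    then have "real (n - Suc k) = real n - 1 - real k" "real (n - Suc 0) = real n - 1"
      by (simp_all add: of_nat_diff)
    then show "cis (real k * \<alpha>) * cis t ^ (n - 1 - k) = cis (real (n - 1) * t) * cnj (cis (real k * (t - \<alpha>)))"
      by (simp add: cis_mult Complex.DeMoivre cis_cnj) (simp add: algebra_simps)
  qed
  ultimately have "fejer_poly n \<alpha> (cis t) = (1 / of_nat n) * (u * cnj u) * cis (real (n - 1) * t)"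
    by (simp add: fejer_poly_def)
  moreover have "u * cnj u = of_real ((cmod u)\<^sup>2)"
    by (rule complex_norm_square[symmetric])
  moreover have "fejer_cis n (t - \<alpha>) = (cmod u)\<^sup>2 / real n"
    by (simp add: fejer_cis_def u_def)
  ultimately show ?thesis
    by simp
qed

lemma continuous_on_fejer_poly: "continuous_on A (fejer_poly n \<alpha>)"
  unfolding fejer_poly_def by (intro continuous_intros)

lemma holomorphic_fejer_poly: "fejer_poly n \<alpha> holomorphic_on A"
  unfolding fejer_poly_def by (intro holomorphic_intros)

lemma bdry_eq_if_isCont:
  assumes "isCont F (cis t)"
  shows "bdry F t = F (cis t)"
proof -
  have "isCont (\<lambda>r. complex_of_real r * cis t) 1"
    by (intro continuous_intros)
  moreover have "isCont F (complex_of_real 1 * cis t)"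
    using assms by simp
  ultimately have "isCont (\<lambda>r. F (complex_of_real r * cis t)) 1"
    by (rule isCont_o2)
  then have "((\<lambda>r. F (complex_of_real r * cis t)) \<longlongrightarrow> F (cis t)) (at_left 1)"
    by (simp add: isCont_def filterlim_at_split)
  then show ?thesis
    unfolding bdry_def by (intro tendsto_Lim) (simp_all add: trivial_limit_at_left_real)
qed

lemma hardy1_if_continuous_on_cball:
  assumes holo: "F holomorphic_on ball 0 1" and cont: "continuous_on (cball 0 1) F"
  shows "F \<in> hardy1"
proof -
  have "bounded (F ` cball 0 1)"
    by (intro compact_imp_bounded compact_continuous_image cont compact_cball)
  then obtain M where M: "\<And>z. z \<in> cball 0 1 \<Longrightarrow> cmod (F z) \<le> M"
    unfolding bounded_iff by blast
  have "(1 / (2*pi)) * (LINT t:{-pi..pi}|lebesgue. cmod (F (complex_of_real r * cis t))) \<le> M"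
    if r: "r \<in> {0..<1::real}" for r
  proof -
    have "(\<lambda>t. cmod (F (complex_of_real r * cis t))) absolutely_integrable_on {-pi..pi}"
      using r by (intro absolutely_integrable_continuous_real continuous_on_compose2[OF cont]
          continuous_intros) (auto simp: norm_mult)
    then have "(LINT t:{-pi..pi}|lebesgue. cmod (F (complex_of_real r * cis t))) \<le>
        (LINT t:{-pi..pi}|lebesgue. M)"
      using r by (intro set_integral_mono) (auto simp: norm_mult intro!: M)
    also have "\<dots> = 2 * pi * M"
      by (simp add: set_integral_const)
    finally show ?thesis by (simp add: field_simps)
  qed
  with holo show ?thesis unfolding hardy1_def by blast
qed

lemma fejer_poly_in_hardy1: "fejer_poly n \<alpha> \<in> hardy1"
  by (intro hardy1_if_continuous_on_cball holomorphic_fejer_poly continuous_on_fejer_poly)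

lemma bdry_fejer_poly: "bdry (fejer_poly n \<alpha>) t = of_real (fejer_cis n (t - \<alpha>)) * cis (real (n - 1) * t)"
  using continuous_on_fejer_poly[of UNIV]
  by (simp add: continuous_on_eq_continuous_at bdry_eq_if_isCont fejer_poly_cis)

lemma hardy1_norm_fejer_poly:
  assumes "n \<ge> 1"
  shows "hardy1_norm (fejer_poly n \<alpha>) = 1"
proof -
  have "cmod (bdry (fejer_poly n \<alpha>) t) = fejer_cis n (t - \<alpha>)" for t
    by (simp add: bdry_fejer_poly norm_mult fejer_cis_nonneg)
  then show ?thesis
    by (simp add: hardy1_norm_def set_integral_fejer_cis[OF assms])
qed

lemma convergent_iff_cauchy_filter:
  fixes g :: "'a \<Rightarrow> 'b::complete_space"
  assumes "F \<noteq> bot"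
  shows "(\<exists>L. (g \<longlongrightarrow> L) F) \<longleftrightarrow> cauchy_filter (filtermap g F)"
proof
  assume "\<exists>L. (g \<longlongrightarrow> L) F"
  then show "cauchy_filter (filtermap g F)"
    unfolding filterlim_def by (blast intro: nhds_imp_cauchy_filter)
next
  assume "cauchy_filter (filtermap g F)"
  moreover have "filtermap g F \<noteq> bot"
    using assms by (simp add: filtermap_bot_iff)
  ultimately obtain L where "filtermap g F \<le> nhds L"
    using cauchy_filter_complete_converges[OF _ complete_UNIV] by auto
  then show "\<exists>L. (g \<longlongrightarrow> L) F"
    unfolding filterlim_def by blast
qed

lemma Rats_approx_continuous_on:
  fixes g :: "real \<Rightarrow> 'b::metric_space"
  assumes "continuous_on S g" "open S" "x \<in> S" "e > 0"
  obtains p where "p \<in> \<rat> \<inter> S" "dist (g x) (g p) < e"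
proof -
  have "eventually (\<lambda>y. y \<in> S) (at x)"
    using assms(2,3) by (rule eventually_at_in_open')
  moreover have "eventually (\<lambda>y. dist (g y) (g x) < e) (at x)"
    using assms by (intro tendstoD) (auto simp: continuous_on_eq_continuous_at isCont_def)
  ultimately have "eventually (\<lambda>y. y \<in> S \<and> dist (g y) (g x) < e) (at x)"
    by (rule eventually_conj)
  then obtain d where "d > 0" and d: "\<And>y. y \<noteq> x \<Longrightarrow> dist y x < d \<Longrightarrow> y \<in> S \<and> dist (g y) (g x) < e"
    unfolding eventually_at by blast
  obtain p where "p \<in> \<rat>" "x - d < p" "p < x"
    using Rats_dense_in_real[of "x - d" x] \<open>d > 0\<close> by auto
  with d[of p] show thesis
    by (intro that) (auto simp: dist_real_def dist_commute)
qed

lemma ex_inverse_Suc_less: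
  fixes x :: real
  assumes "x > 0"
  obtains j where "1 / real (Suc j) < x"
proof -
  obtain k :: nat where "k > 0" "inverse (real k) < x"
    using ex_inverse_of_nat_less[OF assms] by blast
  then have "1 / real (Suc (k - 1)) < x"
    by (simp add: inverse_eq_divide)
  then show thesis
    by (rule that)
qed

lemma interval_left_of_one_subset: "{1 - 1 / real (Suc j)<..<1} \<subseteq> {0<..<1}"
proof
  fix x :: real
  assume "x \<in> {1 - 1 / real (Suc j)<..<1}"
  moreover have "1 / real (Suc j) \<le> 1"
    by simp
  ultimately show "x \<in> {0<..<1}"
    unfolding greaterThanLessThan_iff by linarith
qed

text \<open>A countable form of the Cauchy criterion at \<open>1\<close> from the left; countability is what
  makes the set of parameters with a radial limit measurable.\<close>
definition Cauchy_Rats_at_left_one :: "(real \<Rightarrow> 'a::metric_space) \<Rightarrow> bool" where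
  "Cauchy_Rats_at_left_one g \<longleftrightarrow>
     (\<forall>m. \<exists>j. \<forall>p \<in> \<rat> \<inter> {1 - 1 / real (Suc j)<..<1}. \<forall>q \<in> \<rat> \<inter> {1 - 1 / real (Suc j)<..<1}.
        dist (g p) (g q) \<le> 1 / real (Suc m))"

lemma Cauchy_Rats_at_left_one_if_cauchy_filter:
  assumes "cauchy_filter (filtermap g (at_left 1))"
  shows "Cauchy_Rats_at_left_one g"
  unfolding Cauchy_Rats_at_left_one_def
proof
  fix m :: nat
  have "1 / real (Suc m) > 0"
    by simp
  then obtain P where "eventually P (at_left 1)"
    and P: "\<And>x y. P x \<Longrightarrow> P y \<Longrightarrow> dist (g x) (g y) < 1 / real (Suc m)"
    using assms unfolding cauchy_filter_metric_filtermap by blast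
  then obtain b where "b < 1" and b: "\<And>y. b < y \<Longrightarrow> y < 1 \<Longrightarrow> P y"
    unfolding eventually_at_left_field by blast
  obtain j where j: "1 / real (Suc j) < 1 - b"
    using ex_inverse_Suc_less[of "1 - b"] \<open>b < 1\<close> by auto
  have "\<forall>p \<in> \<rat> \<inter> {1 - 1 / real (Suc j)<..<1}. \<forall>q \<in> \<rat> \<inter> {1 - 1 / real (Suc j)<..<1}.
      dist (g p) (g q) \<le> 1 / real (Suc m)"
  proof (intro ballI)
    fix p q
    assume "p \<in> \<rat> \<inter> {1 - 1 / real (Suc j)<..<1}" "q \<in> \<rat> \<inter> {1 - 1 / real (Suc j)<..<1}"
    with j have "P p" "P q"
      by (auto intro!: b)
    then show "dist (g p) (g q) \<le> 1 / real (Suc m)"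
      using P less_imp_le by blast
  qed
  then show "\<exists>j. \<forall>p \<in> \<rat> \<inter> {1 - 1 / real (Suc j)<..<1}. \<forall>q \<in> \<rat> \<inter> {1 - 1 / real (Suc j)<..<1}.
      dist (g p) (g q) \<le> 1 / real (Suc m)" ..
qed

lemma cauchy_filter_if_Cauchy_Rats_at_left_one:
  assumes cont: "continuous_on {0<..<1} g" and small: "Cauchy_Rats_at_left_one g"
  shows "cauchy_filter (filtermap g (at_left 1))"
  unfolding cauchy_filter_metric_filtermap
proof (intro allI impI)
  fix e :: real
  assume "e > 0"
  then have e3: "e / 3 > 0"
    by simp
  then obtain m where m: "1 / real (Suc m) < e / 3"
    by (rule ex_inverse_Suc_less)
  then obtain j where j: "\<forall>p \<in> \<rat> \<inter> {1 - 1 / real (Suc j)<..<1}. \<forall>q \<in> \<rat> \<inter> {1 - 1 / real (Suc j)<..<1}.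
      dist (g p) (g q) \<le> 1 / real (Suc m)"
    using small unfolding Cauchy_Rats_at_left_one_def by blast
  define I where "I = {1 - 1 / real (Suc j)<..<1}"
  have "continuous_on I g"
    using cont interval_left_of_one_subset unfolding I_def by (rule continuous_on_subset)
  moreover have "open I"
    unfolding I_def by simp
  ultimately have approx: "\<exists>p \<in> \<rat> \<inter> I. dist (g x) (g p) < e / 3" if "x \<in> I" for x
    using Rats_approx_continuous_on that e3 by metis
  have "dist (g x) (g y) < e" if "x \<in> I" "y \<in> I" for x y
  proof -
    obtain p where p: "p \<in> \<rat> \<inter> I" "dist (g x) (g p) < e / 3"
      using approx[OF \<open>x \<in> I\<close>] by blast
    obtain q where q: "q \<in> \<rat> \<inter> I" "dist (g y) (g q) < e / 3"
      using approx[OF \<open>y \<in> I\<close>] by blast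
    have "dist (g p) (g q) \<le> 1 / real (Suc m)"
      using bspec[OF bspec[OF j p(1)[unfolded I_def]] q(1)[unfolded I_def]] .
    moreover have "dist (g x) (g y) \<le> dist (g x) (g p) + dist (g p) (g q) + dist (g q) (g y)"
      using dist_triangle[of "g x" "g y" "g p"] dist_triangle[of "g p" "g y" "g q"] by linarith
    ultimately show ?thesis
      using p(2) q(2) m by (simp add: dist_commute)
  qed
  moreover have "eventually (\<lambda>x. x \<in> I) (at_left 1)"
    unfolding I_def by (rule eventually_at_left_real) simp
  ultimately show "\<exists>P. eventually P (at_left 1) \<and> (\<forall>x y. P x \<and> P y \<longrightarrow> dist (g x) (g y) < e)"
    by blast
qed

lemma convergent_at_left_one_iff_Cauchy_Rats:
  fixes g :: "real \<Rightarrow> 'b::complete_space"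
  assumes "continuous_on {0<..<1} g"
  shows "(\<exists>L. (g \<longlongrightarrow> L) (at_left 1)) \<longleftrightarrow> Cauchy_Rats_at_left_one g"
  using convergent_iff_cauchy_filter[of "at_left 1" g] trivial_limit_at_left_real assms
    Cauchy_Rats_at_left_one_if_cauchy_filter cauchy_filter_if_Cauchy_Rats_at_left_one
  by blast

definition radii :: "nat \<Rightarrow> real" where
  "radii k = 1 - inverse (real (Suc (Suc k)))"

lemma radii_in_unit_interval: "radii k \<in> {0<..<1}"
  by (simp add: radii_def inverse_less_1_iff)

lemma filterlim_radii: "filterlim radii (at_left 1) sequentially"
proof (rule tendsto_imp_filterlim_at_left)
  have "(\<lambda>k. inverse (real (Suc (Suc k)))) \<longlonglongrightarrow> 0"
    using LIMSEQ_Suc[OF LIMSEQ_inverse_real_of_nat] .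
  then show "radii \<longlonglongrightarrow> 1"
    unfolding radii_def using tendsto_diff[OF tendsto_const[of 1]] by fastforce
  show "eventually (\<lambda>k. radii k < 1) sequentially"
    using radii_in_unit_interval by simp
qed

lemma Lim_at_left_one_radii:
  assumes "\<exists>L. (g \<longlongrightarrow> L) (at_left 1)"
  shows "(\<lambda>k. g (radii k)) \<longlonglongrightarrow> Lim (at_left 1) g"
proof -
  obtain L where L: "(g \<longlongrightarrow> L) (at_left 1)"
    using assms by blast
  then have "Lim (at_left 1) g = L"
    by (intro tendsto_Lim) (simp add: trivial_limit_at_left_real)
  with filterlim_compose[OF L filterlim_radii] show ?thesis
    by (simp add: o_def)
qed

lemma Lim_if_not_convergent:
  assumes "\<not> (\<exists>L. (g \<longlongrightarrow> L) F)"
  shows "Lim F g = (THE L. False)"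
proof -
  have "(\<lambda>L. (g \<longlongrightarrow> L) F) = (\<lambda>L. False)"
    using assms by auto
  then show ?thesis
    unfolding Topological_Spaces.Lim_def by simp
qed

lemma borel_measurable_Lim_at_left_one:
  fixes f :: "'a \<Rightarrow> real \<Rightarrow> 'b::{complete_space, second_countable_topology}"
  assumes meas: "\<And>r. r \<in> {0<..<1} \<Longrightarrow> (\<lambda>x. f x r) \<in> borel_measurable M"
    and cont: "\<And>x. continuous_on {0<..<1} (f x)"
  shows "(\<lambda>x. Lim (at_left 1) (f x)) \<in> borel_measurable M"
proof -
  define C where "C x \<longleftrightarrow> (\<exists>L. (f x \<longlongrightarrow> L) (at_left 1))" for x
  have Rats_ball: "(\<forall>p \<in> \<rat> \<inter> A. P p) \<longleftrightarrow> (\<forall>\<rho>::rat. of_rat \<rho> \<in> A \<longrightarrow> P (of_rat \<rho>))" for A P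
    by (auto elim!: Rats_cases)
  have dist_pred: "Measurable.pred M (\<lambda>x. dist (f x p) (f x q) \<le> c)"
    if "p \<in> {0<..<1}" "q \<in> {0<..<1}" for p q c
    using meas[OF that(1)] meas[OF that(2)] by measurable
  have Rats_pred: "Measurable.pred M (\<lambda>x. \<forall>\<rho>::rat. of_rat \<rho> \<in> {1 - 1 / real (Suc j)<..<1} \<longrightarrow>
      (\<forall>\<sigma>::rat. of_rat \<sigma> \<in> {1 - 1 / real (Suc j)<..<1} \<longrightarrow>
        dist (f x (of_rat \<rho>)) (f x (of_rat \<sigma>)) \<le> c))" for j c
  proof (intro pred_intros_countable pred_intros_imp')
    fix \<rho> \<sigma> :: rat
    assume "of_rat \<rho> \<in> {1 - 1 / real (Suc j)<..<1}" "of_rat \<sigma> \<in> {1 - 1 / real (Suc j)<..<1}"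
    then show "Measurable.pred M (\<lambda>x. dist (f x (of_rat \<rho>)) (f x (of_rat \<sigma>)) \<le> c)"
      using interval_left_of_one_subset[of j] by (intro dist_pred) blast+
  qed
  have [measurable]: "Measurable.pred M C"
    unfolding C_def convergent_at_left_one_iff_Cauchy_Rats[OF cont] Cauchy_Rats_at_left_one_def Rats_ball
    by (intro pred_intros_countable Rats_pred)
  have [measurable]: "(\<lambda>x. f x (radii k)) \<in> borel_measurable M" for k
    using meas radii_in_unit_interval by blast
  show ?thesis
  proof (rule borel_measurable_LIMSEQ_metric[where f = "\<lambda>k x. if C x then f x (radii k) else (THE L. False)"])
    show "(\<lambda>x. if C x then f x (radii k) else (THE L. False)) \<in> borel_measurable M" for k
      by measurable
    show "(\<lambda>k. if C x then f x (radii k) else (THE L. False)) \<longlonglongrightarrow> Lim (at_left 1) (f x)" for x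
      by (cases "C x") (simp_all add: C_def Lim_at_left_one_radii Lim_if_not_convergent)
  qed
qed

lemma continuous_on_circle_slice:
  assumes "F holomorphic_on ball 0 1" "r \<in> {0..<1}"
  shows "continuous_on UNIV (\<lambda>t. F (complex_of_real r * cis t))"
  using assms(2) by (intro continuous_on_compose2[OF holomorphic_on_imp_continuous_on[OF assms(1)]]
      continuous_intros) (auto simp: norm_mult)

lemma borel_measurable_circle_slice:
  assumes "F holomorphic_on ball 0 1" "r \<in> {0..<1}"
  shows "(\<lambda>t. F (complex_of_real r * cis t)) \<in> borel_measurable lebesgue"
  using borel_measurable_continuous_onI[OF continuous_on_circle_slice[OF assms]]
  by (simp add: measurable_completion)

lemma borel_measurable_bdry:
  assumes holo: "F holomorphic_on ball 0 1"
  shows "bdry F \<in> borel_measurable lebesgue"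
  unfolding bdry_def
proof (rule borel_measurable_Lim_at_left_one)
  show "(\<lambda>t. F (complex_of_real r * cis t)) \<in> borel_measurable lebesgue" if "r \<in> {0<..<1}" for r
    using that by (intro borel_measurable_circle_slice[OF holo]) simp
  show "continuous_on {0<..<1} (\<lambda>r. F (complex_of_real r * cis t))" for t
    by (intro continuous_on_compose2[OF holomorphic_on_imp_continuous_on[OF holo]] continuous_intros)
      (auto simp: norm_mult)
qed

text \<open>Where the limit does not exist, \<open>Lim\<close> is the junk value \<open>THE L. False\<close>;
  adding its norm makes the bound hold in that case as well.\<close>
lemma norm_Lim_at_left_one_le_liminf:
  fixes g :: "real \<Rightarrow> 'b::real_normed_vector"
  shows "ennreal (norm (Lim (at_left 1) g))
    \<le> liminf (\<lambda>k. ennreal (norm (g (radii k)) + norm (THE L::'b. False)))"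
proof (cases "\<exists>L. (g \<longlongrightarrow> L) (at_left 1)")
  case True
  then have "(\<lambda>k. ennreal (norm (g (radii k)) + norm (THE L::'b. False)))
      \<longlonglongrightarrow> ennreal (norm (Lim (at_left 1) g) + norm (THE L::'b. False))"
    by (intro tendsto_ennrealI tendsto_add tendsto_norm Lim_at_left_one_radii tendsto_const)
  then show ?thesis
    by (simp add: lim_imp_Liminf ennreal_leI)
next
  case False
  have "ennreal (norm (THE L::'b. False)) \<le> ennreal (norm (g (radii k)) + norm (THE L::'b. False))" for k
    by (intro ennreal_leI) simp
  then have "ennreal (norm (THE L::'b. False))
      \<le> liminf (\<lambda>k. ennreal (norm (g (radii k)) + norm (THE L::'b. False)))"
    by (intro Liminf_bounded always_eventually) simp
  then show ?thesis
    using False by (simp add: Lim_if_not_convergent)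
qed

lemma nn_integral_circle_slice:
  assumes "F holomorphic_on ball 0 1" "r \<in> {0..<1}" "c \<ge> 0"
  shows "(\<integral>\<^sup>+ t. ennreal (indicator {-pi..pi} t * (cmod (F (complex_of_real r * cis t)) + c)) \<partial>lebesgue)
    = ennreal ((LINT t:{-pi..pi}|lebesgue. cmod (F (complex_of_real r * cis t))) + 2*pi*c)"
proof -
  have slice_int: "set_integrable lebesgue {-pi..pi} (\<lambda>t. cmod (F (complex_of_real r * cis t)))"
    by (intro absolutely_integrable_continuous_real
        continuous_on_norm[OF continuous_on_subset[OF continuous_on_circle_slice[OF assms(1,2)]]]) simp
  have const_int: "set_integrable lebesgue {-pi..pi} (\<lambda>_. c)"
    by (intro absolutely_integrable_continuous_real continuous_on_const)
  have "(\<integral>\<^sup>+ t. ennreal (indicator {-pi..pi} t * (cmod (F (complex_of_real r * cis t)) + c)) \<partial>lebesgue)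
      = ennreal (LINT t:{-pi..pi}|lebesgue. cmod (F (complex_of_real r * cis t)) + c)"
    using set_integral_add(1)[OF slice_int const_int] assms(3)
    unfolding set_integrable_def set_lebesgue_integral_def
    by (subst nn_integral_eq_integral) auto
  also have "\<dots> = ennreal ((LINT t:{-pi..pi}|lebesgue. cmod (F (complex_of_real r * cis t))) + 2*pi*c)"
    by (simp add: set_integral_add(2)[OF slice_int const_int] set_integral_const)
  finally show ?thesis .
qed

lemma nn_integral_le_if_le_liminf:
  assumes "\<And>k. g k \<in> borel_measurable M"
    and "\<And>k. integral\<^sup>N M (g k) \<le> C"
    and "\<And>x. f x \<le> liminf (\<lambda>k. g k x)"
  shows "integral\<^sup>N M f \<le> C"
proof -
  have "integral\<^sup>N M f \<le> (\<integral>\<^sup>+ x. liminf (\<lambda>k. g k x) \<partial>M)"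
    using assms(3) by (rule nn_integral_mono)
  also have "\<dots> \<le> liminf (\<lambda>k. integral\<^sup>N M (g k))"
    using assms(1) by (rule nn_integral_liminf)
  also have "\<dots> \<le> C"
    using assms(2) by (intro order_trans[OF Liminf_le_Limsup Limsup_bounded]) simp_all
  finally show ?thesis .
qed

text \<open>Fatou's lemma along the radii; parameters without a radial limit carry the constant junk
  value of \<open>Lim\<close>, which is integrable over \<open>[-pi, pi]\<close>.\<close>
lemma set_integrable_bdry:
  assumes "F \<in> hardy1"
  shows "set_integrable lebesgue {-pi..pi} (bdry F)"
proof -
  obtain B where holo: "F holomorphic_on ball 0 1"
    and B: "\<And>r. r \<in> {0..<1} \<Longrightarrow>
      (1 / (2*pi)) * (LINT t:{-pi..pi}|lebesgue. cmod (F (complex_of_real r * cis t))) \<le> B"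
    using assms unfolding hardy1_def by blast
  define c where "c = cmod (THE L::complex. False)"
  define g where "g k t = ennreal (indicator {-pi..pi} t * (cmod (F (complex_of_real (radii k) * cis t)) + c))"
    for k t
  have radii: "radii k \<in> {0..<1}" for k
    using radii_in_unit_interval[of k] by simp
  have [measurable]: "(\<lambda>t::real. t) \<in> borel_measurable lebesgue"
    using id_borel_measurable_lebesgue by (simp add: id_def)
  have g_meas: "g k \<in> borel_measurable lebesgue" for k
  proof -
    note [measurable] = borel_measurable_circle_slice[OF holo radii[of k]]
    show ?thesis
      unfolding g_def by measurable
  qed
  moreover have "integral\<^sup>N lebesgue (g k) \<le> ennreal (2*pi*(B + c))" for k
  proof -
    have "integral\<^sup>N lebesgue (g k) =
        ennreal ((LINT t:{-pi..pi}|lebesgue. cmod (F (complex_of_real (radii k) * cis t))) + 2*pi*c)"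
      unfolding g_def by (rule nn_integral_circle_slice[OF holo radii]) (simp add: c_def)
    also have "\<dots> \<le> ennreal (2*pi*(B + c))"
      using B[OF radii] by (intro ennreal_leI) (simp add: field_simps)
    finally show ?thesis .
  qed
  moreover have "ennreal (norm (indicator {-pi..pi} t *\<^sub>R bdry F t)) \<le> liminf (\<lambda>k. g k t)" for t
    using norm_Lim_at_left_one_le_liminf[of "\<lambda>r. F (complex_of_real r * cis t)"]
    by (cases "t \<in> {-pi..pi}") (simp_all add: g_def bdry_def c_def)
  ultimately have "(\<integral>\<^sup>+ t. ennreal (norm (indicator {-pi..pi} t *\<^sub>R bdry F t)) \<partial>lebesgue)
      \<le> ennreal (2*pi*(B + c))"
    by (rule nn_integral_le_if_le_liminf)
  then have "(\<integral>\<^sup>+ t. ennreal (norm (indicator {-pi..pi} t *\<^sub>R bdry F t)) \<partial>lebesgue) < \<infinity>"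
    by (rule order_le_less_trans) simp
  then show ?thesis
    unfolding set_integrable_def
    by (intro integrableI_bounded) (use borel_measurable_bdry[OF holo] in measurable)
qed

definition coeff_on :: "int \<Rightarrow> complex set \<Rightarrow> (complex \<Rightarrow> complex) \<Rightarrow> complex" where
  "coeff_on n E F = (1 / (2 * complex_of_real pi * \<i>)) *
     (LINT t:{-pi..pi}|lebesgue. indicator E (cis t) * bdry F t * (cnj (cis t)) powi n * (\<i> * cis t))"

lemma Lambda_eq_Sup_coeff_on:
  "Lambda n E = Sup {cmod (coeff_on n E F) | F. F \<in> hardy1 \<and> hardy1_norm F \<le> 1}"
  unfolding Lambda_def coeff_on_def ..

lemma norm_coeff_on_le:
  assumes "F \<in> hardy1"
  shows "cmod (coeff_on n E F) \<le> hardy1_norm F"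
proof -
  define g where "g t = indicator E (cis t) * bdry F t * (cnj (cis t)) powi n * (\<i> * cis t)" for t
  have norm_g: "cmod (g t) = indicator E (cis t) * cmod (bdry F t)" for t
    unfolding g_def by (simp add: norm_mult norm_power_int split: split_indicator)
  have "cmod (LINT t:{-pi..pi}|lebesgue. g t) \<le> (LINT t:{-pi..pi}|lebesgue. cmod (bdry F t))"
  proof (cases "set_integrable lebesgue {-pi..pi} g")
    case True
    have "cmod (LINT t:{-pi..pi}|lebesgue. g t) \<le> (LINT t:{-pi..pi}|lebesgue. cmod (g t))"
      by (rule set_integral_norm_bound[OF True])
    also have "\<dots> \<le> (LINT t:{-pi..pi}|lebesgue. cmod (bdry F t))"
      using set_integrable_norm[OF True] set_integrable_norm[OF set_integrable_bdry[OF assms]]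
      by (rule set_integral_mono) (simp add: norm_g split: split_indicator)
    finally show ?thesis .
  next
    case False
    then have "(LINT t:{-pi..pi}|lebesgue. g t) = 0"
      unfolding set_integrable_def set_lebesgue_integral_def by (rule not_integrable_integral_eq)
    moreover have "0 \<le> (LINT t:{-pi..pi}|lebesgue. cmod (bdry F t))"
      unfolding set_lebesgue_integral_def by simp
    ultimately show ?thesis
      by simp
  qed
  then show ?thesis
    unfolding coeff_on_def hardy1_norm_def g_def[symmetric]
    by (simp add: norm_mult norm_divide field_simps)
qed

lemma bdd_above_norm_coeff_on:
  "bdd_above {cmod (coeff_on n E F) | F. F \<in> hardy1 \<and> hardy1_norm F \<le> 1}"
  unfolding bdd_above_def using norm_coeff_on_le order_trans by blast

lemma coeff_on_fejer_poly:
  assumes "n \<ge> 1"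
  shows "coeff_on (int n) E (fejer_poly n \<alpha>) =
    of_real ((1 / (2*pi)) * (LINT t:{-pi..pi}|lebesgue. indicator E (cis t) * fejer_cis n (t - \<alpha>)))"
proof -
  have "cis (real (n - 1) * t) * cis (- t) ^ n * cis t = 1" for t
    using assms by (simp add: Complex.DeMoivre cis_mult of_nat_diff algebra_simps)
  then have integrand: "indicator E (cis t) * bdry (fejer_poly n \<alpha>) t * (cnj (cis t)) powi (int n) * (\<i> * cis t)
      = \<i> * complex_of_real (indicator E (cis t) * fejer_cis n (t - \<alpha>))" for t
    by (simp add: bdry_fejer_poly power_int_of_nat cis_cnj split: split_indicator) (simp add: algebra_simps)
  show ?thesis
    unfolding coeff_on_def integrand set_integral_mult_right set_integral_complex_of_real
    by simp
qed

lemma set_integral_fejer_le_fejer_cis: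
  assumes "cis -` E \<in> sets lebesgue"
  shows "(LINT t:{-pi..pi}|lebesgue. indicator E (cis t) * fejer n (t - \<alpha>))
     \<le> (LINT t:{-pi..pi}|lebesgue. indicator E (cis t) * fejer_cis n (t - \<alpha>))"
proof -
  have "set_integrable lebesgue ({-pi..pi} \<inter> cis -` E) (\<lambda>t. fejer_cis n (t - \<alpha>))"
    using assms by (intro set_integrable_subset[OF fejer_cis_set_integrable]) auto
  moreover have "(\<lambda>t. indicator ({-pi..pi} \<inter> cis -` E) t *\<^sub>R fejer_cis n (t - \<alpha>)) =
      (\<lambda>t. indicator {-pi..pi} t *\<^sub>R (indicator E (cis t) * fejer_cis n (t - \<alpha>)))"
    by (auto split: split_indicator)
  ultimately have "integrable lebesgue (\<lambda>t. indicator {-pi..pi} t *\<^sub>R (indicator E (cis t) * fejer_cis n (t - \<alpha>)))"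
    unfolding set_integrable_def by simp
  then show ?thesis
    unfolding set_lebesgue_integral_def
    by (rule integral_mono') (auto split: split_indicator intro: fejer_nonneg fejer_cis_nonneg fejer_le_fejer_cis)
qed

theorem mainTheorem5:
  fixes E :: "complex set" and n :: nat and \<alpha> :: real
  assumes "E \<subseteq> sphere 0 1"
    and "cis -` E \<in> sets lebesgue"
    and "n \<ge> 1"
    and "\<alpha> \<in> {-pi..pi}"
  shows "Lambda (int n) E \<ge>
           (1 / (2*pi)) * (LINT t:{-pi..pi}|lebesgue. indicator E (cis t) * fejer n (t - \<alpha>))"
proof -
  have "(1 / (2*pi)) * (LINT t:{-pi..pi}|lebesgue. indicator E (cis t) * fejer n (t - \<alpha>))
      \<le> (1 / (2*pi)) * (LINT t:{-pi..pi}|lebesgue. indicator E (cis t) * fejer_cis n (t - \<alpha>))"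
    using set_integral_fejer_le_fejer_cis[OF assms(2)] by (simp add: divide_right_mono)
  also have "\<dots> = cmod (coeff_on (int n) E (fejer_poly n \<alpha>))"
  proof -
    have "0 \<le> (LINT t:{-pi..pi}|lebesgue. indicator E (cis t) * fejer_cis n (t - \<alpha>))"
      unfolding set_lebesgue_integral_def by (simp add: fejer_cis_nonneg)
    then show ?thesis
      unfolding coeff_on_fejer_poly[OF assms(3)] norm_of_real by simp
  qed
  also have "\<dots> \<le> Lambda (int n) E"
    unfolding Lambda_eq_Sup_coeff_on
    using fejer_poly_in_hardy1[of n \<alpha>] hardy1_norm_fejer_poly[OF assms(3), of \<alpha>]
    by (intro cSup_upper bdd_above_norm_coeff_on) force
  finally show ?thesis .
qed

end
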